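(* Let $(M,g)$ be a spacetime and let $\gamma$ be the worldline of an arbitrarily accelerated observer $\mathcal O$ (with arbitrarily rotating spatial triad). Let $e_a$ be the proper reference frame of $\mathcal O$, and take $e_a$ as the teleparallel frame. Then the gravitational energy-momentum density and the angular momentum density vanish along $\gamma$: $t^{\mu a}|_\gamma=0$ and $M^{ab}|_\gamma=0$.
   Context: Signature $(+,-,-,-)$. A tetrad $e_a=e_a{}^\mu\partial_\mu$ with coframe $\theta^a=e^a{}_\mu dx^\mu$ satisfies $g_{\mu\nu}=\eta_{ab}e^a{}_\mu e^b{}_\nu$; indices are converted with the tetrad and raised/lowered with $\eta_{ab}$ or $g_{\mu\nu}$; $e=\det(e^a{}_\mu)$. The proper reference frame of $\mathcal O$: along $\gamma$, $e_{(0)}$ is the observer's 4-velocity and $e_{(i)}$ its spatial triad; the frame is extended off $\gamma$ by parallel transport (Levi-Civita connection) along the spacelike geodesics orthogonal to $e_{(0)}$, i.e. it is the tetrad adapted to the observer's proper (Fermi-type) coordinates, so that along $\gamma$ the Levi-Civita spin connection is $\mathring\omega^a{}_{bc}|_\gamma=\delta^{(0)}_b\big(a^a\delta^{(0)}_c-a_c\delta^a_{(0)}+\omega^d\varepsilon_{(0)dec}\eta^{ea}\big)$ with $a^a$ the acceleration and $\omega^d$ the triad rotation. Taking $e_a$ as teleparallel frame means the torsion is $T^a{}_{\mu\nu}=\partial_\mu e^a{}_\nu-\partial_\nu e^a{}_\mu$. Define $T_a=T^b{}_{ba}$, $\Sigma^{\lambda\mu\nu}=\tfrac14\big(T^{\lambda\mu\nu}+T^{\mu\lambda\nu}-T^{\nu\lambda\mu}\big)+\tfrac12\big(g^{\lambda\nu}T^{\mu}-g^{\lambda\mu}T^{\nu}\big)$,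 $T=\Sigma^{abc}T_{abc}$, $t^{\mu a}=k\big(4\Sigma^{bc\mu}T_{bc}{}^{a}-e^{a\mu}T\big)$, and $M^{ab}=-4ke\big(\Sigma^{a0b}-\Sigma^{b0a}\big)$, with $k=1/(16\pi)$. *)

theory Defs
  imports "HOL-Analysis.Analysis"
begin

(* Coordinates x^mu on a chart of spacetime: points are real^4, indices (coordinate
   as well as frame indices) range over the numeral type 4 = {0,1,2,3}.
   A tetrad field is given by its coframe matrix  C x $ a $ mu = e^a_mu(x). *)

type_synonym pt = "real^4"
type_synonym coframe = "pt \<Rightarrow> real^4^4"

definition eta :: "4 \<Rightarrow> 4 \<Rightarrow> real" where
  "eta a b = (if a = b then (if a = 0 then 1 else -1) else 0)"

definition etaM :: "real^4^4" where
  "etaM = (\<chi> a b. eta a b)"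

definition kappa :: real where
  "kappa = 1 / (16 * pi)"

definition pd :: "4 \<Rightarrow> (pt \<Rightarrow> real) \<Rightarrow> pt \<Rightarrow> real" where
  "pd i f x = deriv (\<lambda>t. f (x + t *\<^sub>R axis i 1)) 0"

definition metric :: "coframe \<Rightarrow> pt \<Rightarrow> real^4^4" where
  "metric C x = transpose (C x) ** etaM ** C x"

definition ginv :: "coframe \<Rightarrow> pt \<Rightarrow> real^4^4" where
  "ginv C x = matrix_inv (metric C x)"

(* frame e_a^mu = frame C x $ mu $ a  (inverse of the coframe matrix) *)
definition frame :: "coframe \<Rightarrow> pt \<Rightarrow> real^4^4" where
  "frame C x = matrix_inv (C x)"

definition frameUp :: "coframe \<Rightarrow> pt \<Rightarrow> 4 \<Rightarrow> 4 \<Rightarrow> real" where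
  "frameUp C x a mu = (\<Sum>b\<in>UNIV. eta a b * frame C x $ mu $ b)"

definition christ :: "coframe \<Rightarrow> pt \<Rightarrow> 4 \<Rightarrow> 4 \<Rightarrow> 4 \<Rightarrow> real" where
  "christ C x mu nu lam = (1/2) * (\<Sum>rho\<in>UNIV. ginv C x $ mu $ rho *
      (pd nu (\<lambda>y. metric C y $ rho $ lam) x + pd lam (\<lambda>y. metric C y $ rho $ nu) x
       - pd rho (\<lambda>y. metric C y $ nu $ lam) x))"

definition torF :: "coframe \<Rightarrow> pt \<Rightarrow> 4 \<Rightarrow> 4 \<Rightarrow> 4 \<Rightarrow> real" where
  "torF C x a mu nu = pd mu (\<lambda>y. C y $ a $ nu) x - pd nu (\<lambda>y. C y $ a $ mu) x"

definition torC :: "coframe \<Rightarrow> pt \<Rightarrow> 4 \<Rightarrow> 4 \<Rightarrow> 4 \<Rightarrow> real" where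
  "torC C x lam mu nu = (\<Sum>a\<in>UNIV. frame C x $ lam $ a * torF C x a mu nu)"

definition torL :: "coframe \<Rightarrow> pt \<Rightarrow> 4 \<Rightarrow> 4 \<Rightarrow> 4 \<Rightarrow> real" where
  "torL C x lam mu nu = (\<Sum>rho\<in>UNIV. metric C x $ lam $ rho * torC C x rho mu nu)"

definition torU :: "coframe \<Rightarrow> pt \<Rightarrow> 4 \<Rightarrow> 4 \<Rightarrow> 4 \<Rightarrow> real" where
  "torU C x lam mu nu = (\<Sum>al\<in>UNIV. \<Sum>be\<in>UNIV.
      ginv C x $ mu $ al * ginv C x $ nu $ be * torC C x lam al be)"

definition torV :: "coframe \<Rightarrow> pt \<Rightarrow> 4 \<Rightarrow> real" where
  "torV C x mu = (\<Sum>be\<in>UNIV. torC C x be be mu)"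

definition torVU :: "coframe \<Rightarrow> pt \<Rightarrow> 4 \<Rightarrow> real" where
  "torVU C x mu = (\<Sum>al\<in>UNIV. ginv C x $ mu $ al * torV C x al)"

definition Sigma :: "coframe \<Rightarrow> pt \<Rightarrow> 4 \<Rightarrow> 4 \<Rightarrow> 4 \<Rightarrow> real" where
  "Sigma C x lam mu nu =
     (1/4) * (torU C x lam mu nu + torU C x mu lam nu - torU C x nu lam mu)
   + (1/2) * (ginv C x $ lam $ nu * torVU C x mu - ginv C x $ lam $ mu * torVU C x nu)"

definition torScalar :: "coframe \<Rightarrow> pt \<Rightarrow> real" where
  "torScalar C x = (\<Sum>lam\<in>UNIV. \<Sum>mu\<in>UNIV. \<Sum>nu\<in>UNIV.
      Sigma C x lam mu nu * torL C x lam mu nu)"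

definition tEM :: "coframe \<Rightarrow> pt \<Rightarrow> 4 \<Rightarrow> 4 \<Rightarrow> real" where
  "tEM C x mu a = kappa * (4 * (\<Sum>rho\<in>UNIV. \<Sum>sig\<in>UNIV. \<Sum>lam\<in>UNIV.
        Sigma C x rho sig mu * torL C x rho sig lam * frameUp C x a lam)
      - frameUp C x a mu * torScalar C x)"

(* Sigma^{a mu b} with a,b frame indices, mu a coordinate index *)
definition SigmaF :: "coframe \<Rightarrow> pt \<Rightarrow> 4 \<Rightarrow> 4 \<Rightarrow> 4 \<Rightarrow> real" where
  "SigmaF C x a mu b = (\<Sum>rho\<in>UNIV. \<Sum>sig\<in>UNIV.
      C x $ a $ rho * C x $ b $ sig * Sigma C x rho mu sig)"

definition Mang :: "coframe \<Rightarrow> pt \<Rightarrow> 4 \<Rightarrow> 4 \<Rightarrow> real" where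
  "Mang C x a b = - 4 * kappa * det (C x) * (SigmaF C x a 0 b - SigmaF C x b 0 a)"

(* the observer's worldline in its proper (Fermi) coordinates: x = (tau,0,0,0) *)
definition worldline :: "real \<Rightarrow> pt" where
  "worldline tau = tau *\<^sub>R axis 0 1"

end

theory Submission
  imports Defs
begin

text \<open>
  At a point x of the worldline the coframe is the identity, so t and M only see the first
  derivatives d_k e^a_mu there. They vanish for k = 0 because the frame is constant along the
  worldline. For spatial n the lines x + s n are geodesics, which forces Gamma^mu_ij = 0 for
  spatial i, j, and the frame is parallel along them, which gives d_j e^a_mu = Gamma^a_jmu.
  Hence d_j e^a_i = 0, and the Levi-Civita formula makes d_i e^k_0 antisymmetric in the spatial
  indices i, k. The only torsion left is T^(0)_i0, carrying the acceleration, and T^(k)_i0,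
  antisymmetric in i, k and carrying the rotation of the triad; an explicit computation shows that
  torsion of this shape contributes neither to t^{mu a} nor to Sigma^{a0b} - Sigma^{b0a}.
\<close>

lemma exhaust_4_from_0: "(i::4) = 0 \<or> i = 1 \<or> i = 2 \<or> i = 3"
  using exhaust_4[of i] by auto

lemma sum_4_from_0: "sum f (UNIV::4 set) = f 0 + f 1 + f 2 + f 3"
proof -
  have UNIV_eq: "(UNIV::4 set) = {0, 1, 2, 3}" using exhaust_4_from_0 by auto
  show ?thesis unfolding UNIV_eq by (simp add: ac_simps)
qed

lemma symmetric_form_eq_0_if_null_on_spatial:
  fixes g :: "4 \<Rightarrow> 4 \<Rightarrow> real"
  assumes null: "\<And>n::real^4. n $ 0 = 0 \<Longrightarrow>
      (\<Sum>nu\<in>UNIV. \<Sum>lam\<in>UNIV. g nu lam * n $ nu * n $ lam) = 0"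
    and sym: "\<And>i j. g i j = g j i" and "i \<noteq> 0" "j \<noteq> 0"
  shows "g i j = 0"
proof -
  have diagonal: "g k k = 0" if "k \<noteq> 0" for k
    using null[of "axis k 1"] that exhaust_4_from_0[of k] by (auto simp: sum_4_from_0 axis_def)
  have "(axis i 1 + axis j 1 :: real^4) $ 0 = 0"
    using \<open>i \<noteq> 0\<close> \<open>j \<noteq> 0\<close> by (simp add: axis_def)
  from null[OF this] have "g i i + g i j + g j i + g j j = 0"
    using exhaust_4_from_0[of i] exhaust_4_from_0[of j]
    by (auto simp: sum_4_from_0 axis_def algebra_simps)
  then show ?thesis using sym[of i j] diagonal \<open>i \<noteq> 0\<close> \<open>j \<noteq> 0\<close> by simp
qed

lemma matrix_inv_works:
  assumes "invertible A"
  shows "A ** matrix_inv A = mat 1" and "matrix_inv A ** A = mat 1"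
  using someI_ex[OF assms[unfolded invertible_def]] by (simp_all add: matrix_inv_def)

lemma matrix_inv_unique:
  fixes A B :: "'a::field^'n^'n"
  assumes "A ** B = mat 1"
  shows "matrix_inv A = B"
proof -
  have "invertible A" using assms invertible_right_inverse by blast
  have "matrix_inv A = matrix_inv A ** (A ** B)" by (simp add: assms)
  also have "\<dots> = (matrix_inv A ** A) ** B" by (simp add: matrix_mul_assoc)
  also have "\<dots> = B" by (simp add: matrix_inv_works \<open>invertible A\<close>)
  finally show ?thesis .
qed

lemma mat_1_mult_component:
  "(mat 1 :: 'a::semiring_1^'n^'n) $ i $ j * y = (if i = j then y else 0)"
  "y * (mat 1 :: 'a::semiring_1^'n^'n) $ i $ j = (if i = j then y else 0)"
  by (simp_all add: mat_def)

lemma etaM_component [simp]: "etaM $ a $ b = eta a b"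
  by (simp add: etaM_def)

lemma eta_sym: "eta a b = eta b a"
  by (simp add: eta_def)

lemma etaM_mult_etaM: "etaM ** etaM = mat 1"
  by (simp add: matrix_matrix_mult_def mat_def vec_eq_iff sum_4_from_0 eta_def forall_4)

lemma
  assumes "C x = mat 1"
  shows metric_at_mat_1: "metric C x = etaM"
    and ginv_at_mat_1: "ginv C x = etaM"
    and frame_at_mat_1: "frame C x = mat 1"
  using assms etaM_mult_etaM
  by (simp_all add: metric_def ginv_def frame_def matrix_inv_unique)

lemma
  assumes "C x = mat 1"
  shows torC_at_mat_1: "torC C x l m n = torF C x l m n"
    and torL_at_mat_1: "torL C x l m n = eta l l * torF C x l m n"
    and torU_at_mat_1: "torU C x l m n = eta m m * eta n n * torF C x l m n"
    and torVU_at_mat_1: "torVU C x m = eta m m * (\<Sum>b\<in>UNIV. torF C x b b m)"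
    and frameUp_at_mat_1: "frameUp C x a m = eta a m"
    and SigmaF_at_mat_1: "SigmaF C x a m b = Sigma C x a m b"
proof -
  note at_mat_1 = assms metric_at_mat_1[of C x, OF assms] ginv_at_mat_1[of C x, OF assms]
    frame_at_mat_1[of C x, OF assms]
  show torC: "torC C x l m n = torF C x l m n" for l m n
    by (simp add: torC_def at_mat_1 mat_1_mult_component)
  show "torL C x l m n = eta l l * torF C x l m n"
    using exhaust_4_from_0[of l] by (auto simp: torL_def at_mat_1 torC sum_4_from_0 eta_def)
  show "torU C x l m n = eta m m * eta n n * torF C x l m n"
    using exhaust_4_from_0[of m] exhaust_4_from_0[of n]
    by (auto simp: torU_def at_mat_1 torC sum_4_from_0 eta_def)
  show "torVU C x m = eta m m * (\<Sum>b\<in>UNIV. torF C x b b m)"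
    using exhaust_4_from_0[of m] by (auto simp: torVU_def torV_def at_mat_1 torC sum_4_from_0 eta_def)
  show "frameUp C x a m = eta a m"
    using exhaust_4_from_0[of a] exhaust_4_from_0[of m]
    by (auto simp: frameUp_def at_mat_1 mat_1_mult_component sum_4_from_0 eta_def)
  show "SigmaF C x a m b = Sigma C x a m b"
    using exhaust_4_from_0[of a] exhaust_4_from_0[of b]
    by (auto simp: SigmaF_def at_mat_1 mat_1_mult_component sum_4_from_0)
qed

lemma Sigma_at_mat_1:
  assumes "C x = mat 1"
  shows "Sigma C x l m n =
      1/4 * (eta m m * eta n n * torF C x l m n + eta l l * eta n n * torF C x m l n
             - eta l l * eta m m * torF C x n l m)
    + 1/2 * (eta l n * eta m m * (\<Sum>b\<in>UNIV. torF C x b b m)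
             - eta l m * eta n n * (\<Sum>b\<in>UNIV. torF C x b b n))"
  by (simp add: Sigma_def assms torU_at_mat_1 torVU_at_mat_1 ginv_at_mat_1)

definition dcoframe :: "coframe \<Rightarrow> pt \<Rightarrow> 4 \<Rightarrow> 4 \<Rightarrow> 4 \<Rightarrow> real" where
  "dcoframe C x k a mu = pd k (\<lambda>y. C y $ a $ mu) x"

lemma torF_eq_dcoframe: "torF C x a m n = dcoframe C x m a n - dcoframe C x n a m"
  by (simp add: torF_def dcoframe_def)

lemma tEM_Mang_eq_0_at_mat_1:
  assumes C1: "C x = mat 1"
    and time: "\<And>a b. dcoframe C x 0 a b = 0"
    and spatial: "\<And>j a i. j \<noteq> 0 \<Longrightarrow> i \<noteq> 0 \<Longrightarrow> dcoframe C x j a i = 0"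
    and antisym: "\<And>i k. i \<noteq> 0 \<Longrightarrow> k \<noteq> 0 \<Longrightarrow> dcoframe C x i k 0 = - dcoframe C x k i 0"
  shows "tEM C x mu a = 0" and "Mang C x a b = 0"
proof -
  have rotation: "dcoframe C x 1 2 0 = - dcoframe C x 2 1 0" "dcoframe C x 1 3 0 = - dcoframe C x 3 1 0"
      "dcoframe C x 2 3 0 = - dcoframe C x 3 2 0" "dcoframe C x 1 1 0 = 0"
      "dcoframe C x 2 2 0 = 0" "dcoframe C x 3 3 0 = 0"
    using antisym[of 1 2] antisym[of 1 3] antisym[of 2 3] antisym[of 1 1] antisym[of 2 2] antisym[of 3 3]
    by simp_all
  note at_mat_1 = Sigma_at_mat_1[of C x, OF C1] torL_at_mat_1[of C x, OF C1]
    frameUp_at_mat_1[of C x, OF C1] SigmaF_at_mat_1[of C x, OF C1] torF_eq_dcoframe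
  show "tEM C x mu a = 0"
    unfolding tEM_def torScalar_def at_mat_1 using exhaust_4_from_0[of a] exhaust_4_from_0[of mu]
    by (auto simp: sum_4_from_0 time spatial rotation eta_def)
  show "Mang C x a b = 0"
    unfolding Mang_def at_mat_1 using exhaust_4_from_0[of a] exhaust_4_from_0[of b]
    by (auto simp: sum_4_from_0 time spatial rotation eta_def)
qed

lemma has_real_derivative_along_line:
  fixes f :: "'a::real_normed_vector \<Rightarrow> real"
  assumes "(f has_derivative f') (at x)"
  shows "((\<lambda>r. f (x + r *\<^sub>R v)) has_real_derivative f' v) (at 0)"
proof -
  have line: "((\<lambda>r::real. x + r *\<^sub>R v) has_derivative (\<lambda>r. r *\<^sub>R v)) (at 0)"
    by (auto intro!: derivative_eq_intros)
  have "((\<lambda>r. f (x + r *\<^sub>R v)) has_derivative (\<lambda>r. f' (r *\<^sub>R v))) (at 0)"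
    using has_derivative_compose[OF line] assms by simp
  moreover have "(\<lambda>r. f' (r *\<^sub>R v)) = (\<lambda>r. f' v * r)"
    using has_derivative_bounded_linear[OF assms] by (auto simp: fun_eq_iff linear_simps)
  ultimately show ?thesis by (simp add: has_field_derivative_def)
qed

lemma pd_eq_frechet_derivative:
  "f differentiable (at x) \<Longrightarrow> pd i f x = frechet_derivative f (at x) (axis i 1)"
  unfolding pd_def
  by (intro DERIV_imp_deriv has_real_derivative_along_line) (simp add: frechet_derivative_works)

lemma has_derivative_imp_pd: "(f has_derivative f') (at x) \<Longrightarrow> pd i f x = f' (axis i 1)"
  unfolding pd_def by (intro DERIV_imp_deriv has_real_derivative_along_line)

lemma pd_mult:
  assumes "f differentiable (at x)" "g differentiable (at x)"
  shows "pd i (\<lambda>y. f y * g y) x = pd i f x * g x + f x * pd i g x"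
proof -
  have "((\<lambda>y. f y * g y) has_derivative
      (\<lambda>h. f x * frechet_derivative g (at x) h + frechet_derivative f (at x) h * g x)) (at x)"
    using assms by (intro has_derivative_mult) (simp_all add: frechet_derivative_works)
  then show ?thesis using assms by (simp add: has_derivative_imp_pd pd_eq_frechet_derivative)
qed

lemma pd_cmult:
  assumes "f differentiable (at x)"
  shows "pd i (\<lambda>y. c * f y) x = c * pd i f x"
proof -
  have "((\<lambda>y. c * f y) has_derivative (\<lambda>h. c * frechet_derivative f (at x) h)) (at x)"
    using assms by (intro has_derivative_mult_right) (simp add: frechet_derivative_works)
  then show ?thesis using assms by (simp add: has_derivative_imp_pd pd_eq_frechet_derivative)
qed

lemma pd_sum:
  assumes "finite S" "\<And>k. k \<in> S \<Longrightarrow> f k differentiable (at x)"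
  shows "pd i (\<lambda>y. \<Sum>k\<in>S. f k y) x = (\<Sum>k\<in>S. pd i (f k) x)"
proof -
  have "((\<lambda>y. \<Sum>k\<in>S. f k y) has_derivative (\<lambda>h. \<Sum>k\<in>S. frechet_derivative (f k) (at x) h)) (at x)"
    using assms by (intro has_derivative_sum) (simp_all add: frechet_derivative_works)
  then show ?thesis using assms by (simp add: has_derivative_imp_pd pd_eq_frechet_derivative)
qed

lemma metric_component:
  "metric C y $ r $ l = (\<Sum>b\<in>UNIV. \<Sum>a\<in>UNIV. eta a b * (C y $ a $ r * C y $ b $ l))"
  by (simp add: metric_def matrix_matrix_mult_def transpose_def sum_distrib_right sum_distrib_left
      algebra_simps)

lemma metric_sym: "metric C y $ r $ l = metric C y $ l $ r"
  unfolding metric_component by (subst sum.swap) (simp add: eta_sym algebra_simps)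

lemma christ_sym: "christ C y mu nu lam = christ C y mu lam nu"
proof -
  have "(\<lambda>y. metric C y $ nu $ lam) = (\<lambda>y. metric C y $ lam $ nu)"
    using metric_sym by blast
  then show ?thesis unfolding christ_def by (simp add: algebra_simps)
qed

lemma pd_metric_at_mat_1:
  assumes C1: "C x = mat 1" and Cd: "\<And>a mu. (\<lambda>y. C y $ a $ mu) differentiable (at x)"
  shows "pd k (\<lambda>y. metric C y $ r $ l) x
    = eta l l * dcoframe C x k l r + eta r r * dcoframe C x k r l"
proof -
  have "pd k (\<lambda>y. metric C y $ r $ l) x
      = (\<Sum>b\<in>UNIV. \<Sum>a\<in>UNIV. eta a b *
           (dcoframe C x k a r * C x $ b $ l + C x $ a $ r * dcoframe C x k b l))"
    unfolding metric_component using Cd by (simp add: pd_sum pd_cmult pd_mult dcoframe_def)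
  also have "\<dots> = eta l l * dcoframe C x k l r + eta r r * dcoframe C x k r l"
    using exhaust_4_from_0[of r] exhaust_4_from_0[of l]
    by (auto simp: C1 mat_1_mult_component sum_4_from_0 eta_def)
  finally show ?thesis .
qed

lemma christ_at_mat_1:
  assumes C1: "C x = mat 1" and Cd: "\<And>a mu. (\<lambda>y. C y $ a $ mu) differentiable (at x)"
  shows "christ C x mu nu lam = 1/2 * eta mu mu *
      (eta lam lam * dcoframe C x nu lam mu + eta mu mu * dcoframe C x nu mu lam
     + eta nu nu * dcoframe C x lam nu mu + eta mu mu * dcoframe C x lam mu nu
     - eta lam lam * dcoframe C x mu lam nu - eta nu nu * dcoframe C x mu nu lam)"
proof -
  have "christ C x mu nu lam = 1/2 * eta mu mu *
      (pd nu (\<lambda>y. metric C y $ mu $ lam) x + pd lam (\<lambda>y. metric C y $ mu $ nu) x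
       - pd mu (\<lambda>y. metric C y $ nu $ lam) x)"
    unfolding christ_def ginv_at_mat_1[of C x, OF C1] using exhaust_4_from_0[of mu]
    by (auto simp: sum_4_from_0 eta_def)
  then show ?thesis by (simp add: pd_metric_at_mat_1[of C x, OF C1 Cd])
qed

lemma coframe_derivative_eq_uminus_frame_derivative:
  fixes C :: coframe
  assumes C1: "C x = mat 1" and e: "e > 0"
    and Cd: "\<And>a m. (\<lambda>y. C y $ a $ m) differentiable (at x)"
    and inv: "\<And>r. r \<in> {0..<e} \<Longrightarrow> invertible (C (x + r *\<^sub>R n))"
    and frame_deriv: "\<And>a m. ((\<lambda>r. frame C (x + r *\<^sub>R n) $ m $ a) has_real_derivative F' m a)
                               (at 0 within {0..<e})"
  shows "frechet_derivative (\<lambda>y. C y $ a $ b) (at x) n = - F' a b"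
proof -
  let ?C' = "\<lambda>a m. frechet_derivative (\<lambda>y. C y $ a $ m) (at x) n"
  \<comment> \<open>differentiate the identity C \<cdot> frame C = 1 along the line\<close>
  let ?product = "\<lambda>r. \<Sum>m\<in>UNIV. C (x + r *\<^sub>R n) $ a $ m * frame C (x + r *\<^sub>R n) $ m $ b"
  have coframe_deriv: "((\<lambda>r. C (x + r *\<^sub>R n) $ a $ m) has_real_derivative ?C' a m) (at 0 within {0..<e})"
    for m
    by (rule has_field_derivative_at_within[OF has_real_derivative_along_line])
      (use Cd in \<open>simp add: frechet_derivative_works\<close>)
  have "(?product has_real_derivative
      (\<Sum>m\<in>UNIV. ?C' a m * frame C x $ m $ b + F' m b * C x $ a $ m)) (at 0 within {0..<e})"
    using DERIV_sum[OF DERIV_mult[OF coframe_deriv frame_deriv]] by simp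
  then have product_deriv: "(?product has_real_derivative ?C' a b + F' a b) (at 0 within {0..<e})"
    by (simp add: C1 frame_at_mat_1 mat_1_mult_component sum.distrib)
  have "(?product has_real_derivative 0) (at 0 within {0..<e})"
  proof (rule has_field_derivative_transform_within[OF DERIV_const e])
    show "0 \<in> {0..<e}" using e by simp
    fix r assume "r \<in> {0..<e}"
    then have "C (x + r *\<^sub>R n) ** frame C (x + r *\<^sub>R n) = mat 1"
      unfolding frame_def by (intro matrix_inv_works inv)
    from arg_cong[OF this, of "\<lambda>M. M $ a $ b"]
    show "(mat 1 :: real^4^4) $ a $ b = ?product r"
      by (simp only: matrix_matrix_mult_def vec_lambda_beta)
  qed
  moreover have "at 0 within {0..<e} \<noteq> bot"
    using e by (simp add: trivial_limit_within)
  ultimately have "?C' a b + F' a b = 0"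
    using product_deriv has_field_derivative_unique by blast
  then show ?thesis by simp
qed

lemma dcoframe_time_eq_0_if_constant_on_worldline:
  assumes "open I" "tau \<in> I" and constant_on_I: "\<forall>t\<in>I. C (worldline t) = K"
  shows "dcoframe C (worldline tau) 0 a b = 0"
proof -
  obtain d where d: "d > 0" "ball tau d \<subseteq> I" using assms open_contains_ball by blast
  have "((\<lambda>t. C (worldline tau + t *\<^sub>R axis 0 1) $ a $ b) has_real_derivative 0) (at 0)"
  proof (rule has_field_derivative_transform_within[OF DERIV_const d(1)])
    fix t :: real assume "dist t 0 < d"
    then have "tau + t \<in> I" using d(2) by (auto simp: dist_real_def)
    moreover have "worldline tau + t *\<^sub>R axis 0 1 = worldline (tau + t)"
      by (simp add: worldline_def scaleR_add_left)
    ultimately show "K $ a $ b = C (worldline tau + t *\<^sub>R axis 0 1) $ a $ b"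
      using constant_on_I by simp
  qed simp_all
  then show ?thesis unfolding dcoframe_def pd_def by (rule DERIV_imp_deriv)
qed

text \<open>In Fermi coordinates the spatial geodesics from x are the straight lines x + s n with
  n $ 0 = 0; along them the frame is parallel transported.\<close>

definition fermi_frame_at :: "coframe \<Rightarrow> pt set \<Rightarrow> pt \<Rightarrow> bool" where
  "fermi_frame_at C U x \<longleftrightarrow> (\<forall>n::real^4. n $ 0 = 0 \<longrightarrow>
     (\<exists>\<epsilon>>0. \<forall>s. 0 \<le> s \<and> s < \<epsilon> \<longrightarrow>
         x + s *\<^sub>R n \<in> U
       \<and> (\<forall>mu. (\<Sum>nu\<in>UNIV. \<Sum>lam\<in>UNIV.
               christ C (x + s *\<^sub>R n) mu nu lam * n $ nu * n $ lam) = 0)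
       \<and> (\<forall>a mu. ((\<lambda>r. frame C (x + r *\<^sub>R n) $ mu $ a)
               has_real_derivative
                 (- (\<Sum>nu\<in>UNIV. \<Sum>lam\<in>UNIV.
                      christ C (x + s *\<^sub>R n) mu nu lam * n $ nu
                      * frame C (x + s *\<^sub>R n) $ lam $ a)))
               (at s within {0..<\<epsilon>}))))"

lemma fermi_frame_atD:
  assumes "fermi_frame_at C U x" "n $ 0 = 0"
  shows fermi_frame_at_geodesic:
      "(\<Sum>nu\<in>UNIV. \<Sum>lam\<in>UNIV. christ C x mu nu lam * n $ nu * n $ lam) = 0"
    and fermi_frame_at_transport: "\<exists>e>0. (\<forall>r\<in>{0..<e}. x + r *\<^sub>R n \<in> U)
      \<and> (\<forall>a mu. ((\<lambda>r. frame C (x + r *\<^sub>R n) $ mu $ a) has_real_derivative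
             - (\<Sum>nu\<in>UNIV. \<Sum>lam\<in>UNIV. christ C x mu nu lam * n $ nu * frame C x $ lam $ a))
           (at 0 within {0..<e}))"
proof -
  obtain e where "e > 0" and along: "\<forall>s. 0 \<le> s \<and> s < e \<longrightarrow>
         x + s *\<^sub>R n \<in> U
       \<and> (\<forall>mu. (\<Sum>nu\<in>UNIV. \<Sum>lam\<in>UNIV.
               christ C (x + s *\<^sub>R n) mu nu lam * n $ nu * n $ lam) = 0)
       \<and> (\<forall>a mu. ((\<lambda>r. frame C (x + r *\<^sub>R n) $ mu $ a)
               has_real_derivative
                 (- (\<Sum>nu\<in>UNIV. \<Sum>lam\<in>UNIV.
                      christ C (x + s *\<^sub>R n) mu nu lam * n $ nu
                      * frame C (x + s *\<^sub>R n) $ lam $ a)))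
               (at s within {0..<e}))"
    using assms(1)[unfolded fermi_frame_at_def, rule_format, OF assms(2)]
    by (elim exE conjE) (rule that)
  from along[rule_format, of 0] \<open>e > 0\<close>
  show "(\<Sum>nu\<in>UNIV. \<Sum>lam\<in>UNIV. christ C x mu nu lam * n $ nu * n $ lam) = 0"
    by simp
  show "\<exists>e>0. (\<forall>r\<in>{0..<e}. x + r *\<^sub>R n \<in> U)
      \<and> (\<forall>a mu. ((\<lambda>r. frame C (x + r *\<^sub>R n) $ mu $ a) has_real_derivative
             - (\<Sum>nu\<in>UNIV. \<Sum>lam\<in>UNIV. christ C x mu nu lam * n $ nu * frame C x $ lam $ a))
           (at 0 within {0..<e}))"
    using along[rule_format, of 0] along \<open>e > 0\<close> by auto
qed

lemma christ_spatial_eq_0_if_fermi_frame_at: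
  assumes "fermi_frame_at C U x" "i \<noteq> 0" "j \<noteq> 0"
  shows "christ C x mu i j = 0"
  using symmetric_form_eq_0_if_null_on_spatial[of "christ C x mu"]
    fermi_frame_at_geodesic[OF assms(1)] christ_sym assms(2,3) by blast

lemma dcoframe_spatial_eq_christ_if_fermi_frame_at:
  assumes C1: "C x = mat 1" and Cd: "\<And>a mu. (\<lambda>y. C y $ a $ mu) differentiable (at x)"
    and inv: "\<forall>y\<in>U. invertible (C y)" and fermi: "fermi_frame_at C U x" and "j \<noteq> 0"
  shows "dcoframe C x j a b = christ C x a j b"
proof -
  let ?n = "axis j 1 :: real^4"
  have "?n $ 0 = 0" using \<open>j \<noteq> 0\<close> by (simp add: axis_def)
  then obtain e where e: "e > 0" and in_U: "\<forall>r\<in>{0..<e}. x + r *\<^sub>R ?n \<in> U"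
    and transport: "\<And>a mu. ((\<lambda>r. frame C (x + r *\<^sub>R ?n) $ mu $ a) has_real_derivative
        - (\<Sum>nu\<in>UNIV. \<Sum>lam\<in>UNIV. christ C x mu nu lam * ?n $ nu * frame C x $ lam $ a))
        (at 0 within {0..<e})"
    using fermi_frame_at_transport[OF fermi] by blast
  have "frechet_derivative (\<lambda>y. C y $ a $ b) (at x) ?n
     = - (- (\<Sum>nu\<in>UNIV. \<Sum>lam\<in>UNIV. christ C x a nu lam * ?n $ nu * frame C x $ lam $ b))"
    using in_U inv by (intro coframe_derivative_eq_uminus_frame_derivative[OF C1 e Cd _ transport]) auto
  also have "\<dots> = christ C x a j b"
    using exhaust_4_from_0[of j] exhaust_4_from_0[of b]
    by (auto simp: C1 frame_at_mat_1 mat_1_mult_component sum_4_from_0 axis_def)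
  finally show ?thesis using Cd by (simp add: dcoframe_def pd_eq_frechet_derivative)
qed

lemma dcoframe_spatial_time_antisym:
  assumes C1: "C x = mat 1" and Cd: "\<And>a mu. (\<lambda>y. C y $ a $ mu) differentiable (at x)"
    and time: "\<And>a b. dcoframe C x 0 a b = 0"
    and spatial: "\<And>j a i. j \<noteq> 0 \<Longrightarrow> i \<noteq> 0 \<Longrightarrow> dcoframe C x j a i = 0"
    and transport: "\<And>j a b. j \<noteq> 0 \<Longrightarrow> dcoframe C x j a b = christ C x a j b"
    and "i \<noteq> 0" "k \<noteq> 0"
  shows "dcoframe C x i k 0 = - dcoframe C x k i 0"
proof -
  have "dcoframe C x i k 0 = christ C x k i 0" using transport \<open>i \<noteq> 0\<close> by simp
  also have "\<dots> = (dcoframe C x i k 0 - dcoframe C x k i 0) / 2"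
    using \<open>i \<noteq> 0\<close> \<open>k \<noteq> 0\<close>
    by (simp add: christ_at_mat_1[of C x, OF C1 Cd] time spatial eta_def field_simps)
  finally show ?thesis by simp
qed

theorem mainTheorem2:
  fixes C :: "real^4 \<Rightarrow> real^4^4" and U :: "(real^4) set" and I :: "real set"
  assumes U_open: "open U"
    and I_open: "open I"
    and C_diff: "\<forall>x\<in>U. \<forall>a mu. (\<lambda>y. C y $ a $ mu) differentiable (at x)"
    and C_inv: "\<forall>x\<in>U. invertible (C x)"
    and on_chart: "\<forall>tau\<in>I. worldline tau \<in> U"
    and adapted: "\<forall>tau\<in>I. C (worldline tau) = mat 1"
    and fermi: "\<forall>tau\<in>I. \<forall>n::real^4. n $ 0 = 0 \<longrightarrow>
        (\<exists>\<epsilon>>0. \<forall>s. 0 \<le> s \<and> s < \<epsilon> \<longrightarrow>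
           worldline tau + s *\<^sub>R n \<in> U
         \<and> (\<forall>mu. (\<Sum>nu\<in>UNIV. \<Sum>lam\<in>UNIV.
                 christ C (worldline tau + s *\<^sub>R n) mu nu lam * n $ nu * n $ lam) = 0)
         \<and> (\<forall>a mu. ((\<lambda>r. frame C (worldline tau + r *\<^sub>R n) $ mu $ a)
                 has_real_derivative
                   (- (\<Sum>nu\<in>UNIV. \<Sum>lam\<in>UNIV.
                        christ C (worldline tau + s *\<^sub>R n) mu nu lam * n $ nu
                        * frame C (worldline tau + s *\<^sub>R n) $ lam $ a)))
                 (at s within {0..<\<epsilon>})))"
  shows "\<forall>tau\<in>I. (\<forall>mu a. tEM C (worldline tau) mu a = 0)
                \<and> (\<forall>a b. Mang C (worldline tau) a b = 0)"
proof (intro ballI conjI allI)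
  fix tau mu a b assume "tau \<in> I"
  define x where "x = worldline tau"
  have C1: "C x = mat 1" using adapted \<open>tau \<in> I\<close> x_def by blast
  have Cd: "\<And>a mu. (\<lambda>y. C y $ a $ mu) differentiable (at x)"
    using C_diff on_chart \<open>tau \<in> I\<close> x_def by blast
  have fermi_x: "fermi_frame_at C U x"
    unfolding fermi_frame_at_def x_def using fermi \<open>tau \<in> I\<close> by (rule bspec)
  have time: "dcoframe C x 0 a b = 0" for a b
    using dcoframe_time_eq_0_if_constant_on_worldline[OF I_open \<open>tau \<in> I\<close>] adapted x_def by blast
  have transport: "dcoframe C x j a b = christ C x a j b" if "j \<noteq> 0" for j a b
    using dcoframe_spatial_eq_christ_if_fermi_frame_at[OF C1 Cd C_inv fermi_x that] .
  have spatial: "dcoframe C x j a i = 0" if "j \<noteq> 0" "i \<noteq> 0" for j a i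
    using transport christ_spatial_eq_0_if_fermi_frame_at[OF fermi_x] that by simp
  have antisym: "dcoframe C x i k 0 = - dcoframe C x k i 0" if "i \<noteq> 0" "k \<noteq> 0" for i k
    using dcoframe_spatial_time_antisym[OF C1 Cd time spatial transport that] .
  show "tEM C (worldline tau) mu a = 0" "Mang C (worldline tau) a b = 0"
    using tEM_Mang_eq_0_at_mat_1[OF C1 time spatial antisym] x_def by auto
qed

end
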